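(* Let $m\geq 2$ and let $f=a_0+a_1z+\cdots+a_mz^m\in\mathbb{Z}[z]$ be a primitive polynomial with $a_0a_m\neq 0$. Let $b$ be a positive divisor of $a_m$, and suppose there exist a real number $\gamma\geq|a_m|/b$ and an index $j$ with $0\leq j\leq m-1$ such that $$|a_j|>\sum_{0\leq i<j}|a_i|\,b^{j-i}\gamma^{j-i}+\sum_{j<i\leq m}\frac{|a_i|}{|a_m|^{i-j}}\gamma^{i-j},$$ where an empty sum is $0$. Then $f$ is a product of at most $m-j$ irreducible polynomials in $\mathbb{Z}[z]$. In particular, if $j=m-1$, then $f$ is irreducible in $\mathbb{Z}[z]$.
   Context: A polynomial in $\mathbb{Z}[z]$ is primitive if the greatest common divisor of its coefficients is $1$. "$f$ is a product of at most $r$ irreducible polynomials" means that in a factorization of $f$ into irreducible elements of $\mathbb{Z}[z]$, the number of factors (counted with multiplicity) is at most $r$. *)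

theory Defs
  imports "HOL-Computational_Algebra.Computational_Algebra"
begin

definition prod_at_most_irreducibles :: "int poly \<Rightarrow> nat \<Rightarrow> bool" where
  "prod_at_most_irreducibles f r \<longleftrightarrow>
     (\<exists>fs :: int poly list. length fs \<le> r \<and> (\<forall>g\<in>set fs. irreducible g) \<and> f = prod_list fs)"

end

theory Submission
  imports Defs "HOL-Complex_Analysis.Complex_Analysis"
begin

text \<open>Let r = 1/(b\<gamma>) and R = \<gamma>/|a_m|, so that r \<le> 1/|a_m| \<le> R. On the closed annulus
  r \<le> |z| \<le> R the hypothesis makes the monomial a_j z^j dominate the remaining terms of f, so f
  has no complex root there, and Rouche's theorem on the circle |z| = R shows that exactly m - j
  roots, counted with multiplicity, satisfy |z| > R. An irreducible factor g of f is nonconstant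
  because f is primitive, and |g(0)| \<ge> 1 is |lc g| times the product of the moduli of the roots
  of g, so g has a root of modulus at least 1/|lc g| \<ge> 1/|a_m| \<ge> r, hence of modulus > R.
  The root multisets of the factors add up to that of f, so there are at most m - j factors.\<close>

hide_const (open) Henstock_Kurzweil_Integration.content

lemma map_poly_of_int_mult:
  "map_poly (of_int :: int \<Rightarrow> 'a::comm_ring_1) (p * q) = map_poly of_int p * map_poly of_int q"
  by (rule poly_eqI) (simp add: coeff_map_poly coeff_mult)

lemma map_poly_of_int_prod_list:
  "map_poly (of_int :: int \<Rightarrow> 'a::comm_ring_1) (prod_list ps) = prod_list (map (map_poly of_int) ps)"
  by (induction ps) (simp_all add: map_poly_of_int_mult)

lemma degree_of_int_poly [simp]: "degree (map_poly (of_int :: int \<Rightarrow> 'a::{comm_ring_1,ring_char_0}) p) = degree p"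
  by (rule degree_map_poly) simp

lemma of_int_poly_eq_0_iff [simp]:
  "map_poly (of_int :: int \<Rightarrow> 'a::{comm_ring_1,ring_char_0}) p = 0 \<longleftrightarrow> p = 0"
  by (rule map_poly_eq_0_iff) auto

lemma norm_poly_minus_monomial_le:
  fixes p :: "'a :: real_normed_field poly" and z :: 'a and A B \<gamma> :: real
  assumes "degree p = m" "j \<le> m"
    and lower: "1 \<le> B * \<gamma> * norm z" and upper: "norm z \<le> \<gamma> / A"
  shows "norm (poly p z - coeff p j * z ^ j)
     \<le> ((\<Sum>i<j. norm (coeff p i) * B ^ (j - i) * \<gamma> ^ (j - i))
         + (\<Sum>i\<in>{j<..m}. norm (coeff p i) / A ^ (i - j) * \<gamma> ^ (i - j))) * norm z ^ j"
proof -
  define t where "t = norm z"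
  have "{..m} = {..<j} \<union> insert j {j<..m}" using assms(2) by auto
  then have "poly p z - coeff p j * z ^ j = (\<Sum>i<j. coeff p i * z ^ i) + (\<Sum>i\<in>{j<..m}. coeff p i * z ^ i)"
    by (simp add: poly_altdef assms(1)) (subst sum.union_disjoint; auto)
  also have "norm \<dots> \<le> (\<Sum>i<j. norm (coeff p i) * B ^ (j - i) * \<gamma> ^ (j - i) * t ^ j)
      + (\<Sum>i\<in>{j<..m}. norm (coeff p i) / A ^ (i - j) * \<gamma> ^ (i - j) * t ^ j)"
  proof (intro order_trans[OF norm_triangle_ineq] add_mono order_trans[OF norm_sum] sum_mono)
    fix i assume "i \<in> {..<j}"
    then have "t ^ i * 1 \<le> t ^ i * (B * \<gamma> * t) ^ (j - i)"
      using lower by (intro mult_left_mono one_le_power) (auto simp: t_def)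
    also have "\<dots> = B ^ (j - i) * \<gamma> ^ (j - i) * t ^ j"
      using \<open>i \<in> {..<j}\<close> by (simp add: power_mult_distrib power_add[symmetric])
    finally show "norm (coeff p i * z ^ i) \<le> norm (coeff p i) * B ^ (j - i) * \<gamma> ^ (j - i) * t ^ j"
      by (simp add: norm_mult norm_power t_def mult.assoc mult_left_mono)
  next
    fix i assume "i \<in> {j<..m}"
    then have "t ^ i = t ^ (i - j) * t ^ j" by (simp flip: power_add)
    also have "\<dots> \<le> (\<gamma> / A) ^ (i - j) * t ^ j"
      using upper by (intro mult_right_mono power_mono) (auto simp: t_def)
    finally show "norm (coeff p i * z ^ i) \<le> norm (coeff p i) / A ^ (i - j) * \<gamma> ^ (i - j) * t ^ j"
      by (simp add: norm_mult norm_power t_def power_divide)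
         (metis mult_left_mono norm_ge_zero times_divide_eq_right mult.assoc)
  qed
  finally show ?thesis by (simp add: sum_distrib_right distrib_right t_def)
qed

lemma norm_poly_minus_monomial_less:
  fixes p :: "'a :: real_normed_field poly" and z :: 'a and A B \<gamma> :: real
  assumes "degree p = m" "j \<le> m" "z \<noteq> 0"
    and "1 \<le> B * \<gamma> * norm z" "norm z \<le> \<gamma> / A"
    and "(\<Sum>i<j. norm (coeff p i) * B ^ (j - i) * \<gamma> ^ (j - i))
         + (\<Sum>i\<in>{j<..m}. norm (coeff p i) / A ^ (i - j) * \<gamma> ^ (i - j)) < norm (coeff p j)"
  shows "norm (poly p z - coeff p j * z ^ j) < norm (coeff p j * z ^ j)"
proof -
  have "norm (poly p z - coeff p j * z ^ j)
     \<le> ((\<Sum>i<j. norm (coeff p i) * B ^ (j - i) * \<gamma> ^ (j - i))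
         + (\<Sum>i\<in>{j<..m}. norm (coeff p i) / A ^ (i - j) * \<gamma> ^ (i - j))) * norm z ^ j"
    using assms(1,2,4,5) by (rule norm_poly_minus_monomial_le)
  also have "\<dots> < norm (coeff p j) * norm z ^ j"
    using assms(3,6) by (intro mult_strict_right_mono) auto
  finally show ?thesis by (simp add: norm_mult norm_power)
qed

lemma zorder_poly:
  fixes p :: "complex poly"
  assumes "p \<noteq> 0"
  shows "zorder (poly p) z = int (order z p)"
proof -
  obtain q where q: "p = [:-z,1:] ^ order z p * q" "\<not> [:-z,1:] dvd q"
    using order_decomp[OF assms] by blast
  show ?thesis
  proof (rule zorder_eqI[where S=UNIV and g="poly q"])
    show "poly q z \<noteq> 0" using q(2) by (simp add: poly_eq_0_iff_dvd)
    show "poly p w = poly q w * (w - z) powi int (order z p)" for w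
      by (subst q(1)) (simp add: poly_power mult.commute)
  qed (auto intro!: holomorphic_intros)
qed

lemma sum_winding_number_zorder_poly_circlepath:
  fixes p :: "complex poly" and R :: real
  assumes "p \<noteq> 0" "R > 0" and no_root_on_circle: "\<And>x. poly p x = 0 \<Longrightarrow> cmod x \<noteq> R"
  shows "(\<Sum>x | poly p x = 0. winding_number (circlepath 0 R) x * zorder (poly p) x)
       = of_nat (size (filter_mset (\<lambda>x. cmod x < R) (proots p)))"
proof -
  have "winding_number (circlepath 0 R) x * zorder (poly p) x = (if cmod x < R then of_nat (order x p) else 0)"
    if "poly p x = 0" for x
  proof (cases "cmod x < R")
    case True
    then show ?thesis by (simp add: winding_number_circlepath zorder_poly[OF assms(1)])
  next
    case False
    with no_root_on_circle[OF that] have "cmod x > R" by auto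
    then have "winding_number (circlepath 0 R) x = 0" using assms(2)
      by (intro winding_number_zero_outside[of _ "cball 0 R"]) (auto simp: path_image_circlepath)
    then show ?thesis using False by simp
  qed
  then have "(\<Sum>x | poly p x = 0. winding_number (circlepath 0 R) x * zorder (poly p) x)
      = (\<Sum>x | poly p x = 0. if cmod x < R then of_nat (order x p) else 0)"
    by (intro sum.cong) auto
  also have "\<dots> = of_nat (\<Sum>x | poly p x = 0 \<and> cmod x < R. order x p)"
    using poly_roots_finite[OF assms(1)]
    by (simp add: sum.If_cases Collect_conj_eq[symmetric] Int_def conj_commute)
  also have "(\<Sum>x | poly p x = 0 \<and> cmod x < R. order x p) = size (filter_mset (\<lambda>x. cmod x < R) (proots p))"
    by (subst size_multiset_overloaded_eq) (auto simp: assms(1) intro!: sum.cong)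
  finally show ?thesis .
qed

lemma size_proots_in_ball_eq_of_dominant_monomial:
  fixes p :: "complex poly" and R :: real and c :: complex
  assumes "p \<noteq> 0" "R > 0" "c \<noteq> 0"
    and dom: "\<And>z. cmod z = R \<Longrightarrow> cmod (poly p z - c * z ^ j) < cmod (c * z ^ j)"
  shows "size (filter_mset (\<lambda>x. cmod x < R) (proots p)) = j"
proof -
  define q where "q = monom c j"
  have "q \<noteq> 0" "degree q = j" "poly q = (\<lambda>z. c * z ^ j)"
    using assms(3) by (auto simp: q_def degree_monom_eq poly_monom)
  have roots_q: "x = 0" if "poly q x = 0" for x
    using assms(3) that \<open>poly q = _\<close> by (cases "j = 0") auto
  have no_root_on_circle: "cmod x \<noteq> R" if "poly p x = 0 \<or> poly q x = 0" for x
    using dom[of x] that roots_q[of x] assms(2) by auto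
  have "(\<Sum>x\<in>{x\<in>UNIV. poly q x + (poly p x - poly q x) = 0}.
          winding_number (circlepath 0 R) x * zorder (\<lambda>x. poly q x + (poly p x - poly q x)) x)
      = (\<Sum>x\<in>{x\<in>UNIV. poly q x = 0}. winding_number (circlepath 0 R) x * zorder (poly q) x)"
  proof (rule Rouche_theorem)
    show "finite {x \<in> UNIV. poly q x + (poly p x - poly q x) = 0}"
      using poly_roots_finite[OF assms(1)] by simp
    show "finite {x \<in> UNIV. poly q x = 0}" using poly_roots_finite[OF \<open>q \<noteq> 0\<close>] by simp
    show "\<forall>z\<in>path_image (circlepath 0 R). cmod (poly p z - poly q z) < cmod (poly q z)"
      using assms(2) dom by (auto simp: \<open>poly q = _\<close> path_image_circlepath)
  qed (auto intro!: holomorphic_intros)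
  then have "(of_nat (size (filter_mset (\<lambda>x. cmod x < R) (proots p))) :: complex)
      = of_nat (size (filter_mset (\<lambda>x. cmod x < R) (proots q)))"
    using sum_winding_number_zorder_poly_circlepath[OF assms(1,2)]
      sum_winding_number_zorder_poly_circlepath[OF \<open>q \<noteq> 0\<close> assms(2)] no_root_on_circle
    by simp
  also have "filter_mset (\<lambda>x. cmod x < R) (proots q) = proots q"
    using \<open>q \<noteq> 0\<close> roots_q assms(2) by (force simp: filter_mset_eq_conv)
  finally show ?thesis using \<open>degree q = j\<close> by (simp add: size_proots_complex)
qed

lemma size_proots_outside_ball_of_dominant_monomial:
  fixes p :: "complex poly" and R :: real and c :: complex
  assumes "p \<noteq> 0" "R > 0"
    and dom: "\<And>z. cmod z = R \<Longrightarrow> cmod (poly p z - c * z ^ j) < cmod (c * z ^ j)"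
  shows "size (filter_mset (\<lambda>x. R < cmod x) (proots p)) = degree p - j"
proof -
  have "c \<noteq> 0" using dom[of "of_real R"] assms(2) by auto
  have "filter_mset (\<lambda>x. \<not> cmod x < R) (proots p) = filter_mset (\<lambda>x. R < cmod x) (proots p)"
  proof (intro filter_mset_cong refl)
    fix x assume "x \<in># proots p"
    then have "poly p x = 0" using assms(1) by simp
    then show "(\<not> cmod x < R) = (R < cmod x)" using dom[of x] by (cases "cmod x = R") auto
  qed
  moreover have "size (proots p) = degree p" by (rule size_proots_complex)
  ultimately show ?thesis
    using size_proots_in_ball_eq_of_dominant_monomial[OF assms(1,2) \<open>c \<noteq> 0\<close> dom]
      multiset_partition[of "proots p" "\<lambda>x. cmod x < R"] by (metis add_diff_cancel_left' size_union)
qed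

lemma irreducible_factorization_exists:
  fixes x :: "'a :: factorial_semiring"
  assumes "x \<noteq> 0" "\<not> is_unit x"
  obtains fs where "\<forall>g\<in>set fs. irreducible g" "x = prod_list fs"
proof -
  obtain xs where xs: "mset xs = prime_factorization x" using ex_mset by blast
  then obtain g gs where xs_eq: "xs = g # gs"
    using assms by (cases xs) (auto simp: prime_factorization_empty_iff)
  have irr: "irreducible h" if "h \<in> set xs" for h
    using that xs in_prime_factors_imp_prime prime_elem_imp_irreducible
    by (metis prime_imp_prime_elem set_mset_mset)
  have "normalize x = normalize (prod_list xs)"
    using prod_mset_prime_factorization_weak[OF assms(1)] xs by (simp flip: prod_mset_prod_list)
  then obtain u where u: "is_unit u" "x = u * prod_list xs" by (rule associatedE1)
  show ?thesis
  proof
    show "\<forall>h\<in>set (u * g # gs). irreducible h"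
      using irr xs_eq u(1) by (auto simp: irreducible_mult_unit_left)
    show "x = prod_list (u * g # gs)" using u(2) xs_eq by (simp add: mult.assoc)
  qed
qed

lemma degree_pos_if_irreducible_dvd_primitive:
  fixes f g :: "'a :: {factorial_ring_gcd, semiring_gcd_mult_normalize} poly"
  assumes "content f = 1" "irreducible g" "g dvd f"
  shows "degree g > 0"
proof (rule ccontr)
  assume "\<not> degree g > 0"
  then have g: "g = [:coeff g 0:]" by (simp add: degree_0_id)
  then have "coeff g 0 dvd content f" using assms(3) by (metis const_poly_dvd_iff_dvd_content)
  then have "is_unit g" using assms(1) by (subst g) (simp add: is_unit_const_poly_iff)
  then show False using assms(2) by (simp add: irreducible_def)
qed

lemma length_le_size_proots_prod_list:
  fixes ps :: "'a :: idom poly list"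
  assumes "\<And>p. p \<in> set ps \<Longrightarrow> p \<noteq> 0 \<and> (\<exists>x. poly p x = 0 \<and> P x)"
  shows "length ps \<le> size (filter_mset P (proots (prod_list ps)))"
  using assms
proof (induction ps)
  case (Cons p ps)
  then obtain x where "p \<noteq> 0" "poly p x = 0" "P x" by auto
  then have "x \<in># filter_mset P (proots p)" by simp
  then have "1 \<le> size (filter_mset P (proots p))"
    by (metis One_nat_def Suc_leI neq0_conv size_eq_0_iff_empty empty_iff set_mset_empty)
  moreover have "prod_list ps \<noteq> 0" using Cons.prems by (auto simp: prod_list_zero_iff)
  ultimately show ?case using Cons \<open>p \<noteq> 0\<close> by (simp add: proots_mult)
qed simp

lemma norm_poly_0_linear_factors_less:
  fixes M :: "complex multiset"
  assumes "\<forall>x\<in>#M. cmod x < r" "M \<noteq> {#}"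
  shows "cmod (poly (\<Prod>x\<in>#M. [:-x,1:]) 0) < r ^ size M"
  using assms
proof (induction M)
  case (add x M)
  have "0 \<le> cmod x" "cmod x < r" using add.prems by auto
  then have "0 < r" by linarith
  show ?case
  proof (cases "M = {#}")
    case False
    then have "cmod (poly (\<Prod>x\<in>#M. [:-x,1:]) 0) < r ^ size M" using add by simp
    then show ?thesis
      using \<open>0 \<le> cmod x\<close> \<open>cmod x < r\<close> \<open>0 < r\<close> by (simp add: norm_mult) (rule mult_strict_mono, auto)
  qed (use add.prems in simp)
qed simp

lemma int_poly_has_root_of_norm_ge:
  fixes g :: "int poly"
  assumes "degree g \<noteq> 0" "coeff g 0 \<noteq> 0"
  obtains x where "poly (map_poly of_int g) x = 0" "1 \<le> \<bar>real_of_int (lead_coeff g)\<bar> * cmod x"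
proof -
  define G where "G = (map_poly of_int g :: complex poly)"
  define L where "L = \<bar>real_of_int (lead_coeff g)\<bar>"
  have "degree G = degree g" by (simp add: G_def)
  then have "G \<noteq> 0" using assms(1) by auto
  have "lead_coeff g \<noteq> 0" using assms(1) by auto
  then have "L \<ge> 1" unfolding L_def by linarith
  have "\<exists>x\<in>#proots G. 1 / L \<le> cmod x"
  proof (rule ccontr)
    assume "\<not> ?thesis"
    then have small: "\<forall>x\<in>#proots G. cmod x < 1 / L" by auto
    have "proots G \<noteq> {#}" using assms(1) size_proots_complex[of G] by (auto simp: G_def)
    have "real_of_int \<bar>coeff g 0\<bar> = L * cmod (poly (\<Prod>x\<in>#proots G. [:-x,1:]) 0)"
      using arg_cong[OF complex_poly_decompose_multiset[of G], of "\<lambda>q. cmod (poly q 0)"]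
      by (simp add: G_def L_def norm_mult coeff_map_poly poly_0_coeff_0)
    also have "\<dots> < L * (1 / L) ^ degree g"
      using norm_poly_0_linear_factors_less[OF small \<open>proots G \<noteq> {#}\<close>] \<open>L \<ge> 1\<close>
      by (simp add: G_def size_proots_complex)
    also have "\<dots> \<le> L * (1 / L) ^ 1"
      using \<open>L \<ge> 1\<close> assms(1) by (intro mult_left_mono power_decreasing) auto
    finally show False using assms(2) \<open>L \<ge> 1\<close> by simp
  qed
  then obtain x where "x \<in># proots G" "1 / L \<le> cmod x" by blast
  moreover from this(2) have "1 \<le> L * cmod x" using \<open>L \<ge> 1\<close> by (simp add: field_simps)
  ultimately show ?thesis using that \<open>G \<noteq> 0\<close> by (simp add: G_def L_def)
qed

lemma int_poly_factor_has_root_of_norm_ge: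
  fixes f g :: "int poly"
  assumes "content f = 1" "coeff f 0 \<noteq> 0" "irreducible g" "g dvd f"
  obtains x where "poly (map_poly of_int g) x = 0" "1 \<le> \<bar>real_of_int (lead_coeff f)\<bar> * cmod x"
proof -
  obtain h where f_eq: "f = g * h" using assms(4) by (rule dvdE)
  have "degree g \<noteq> 0" using degree_pos_if_irreducible_dvd_primitive[OF assms(1,3,4)] by simp
  moreover have "coeff g 0 \<noteq> 0" using assms(2) f_eq by (auto simp: coeff_mult_0)
  ultimately obtain x :: complex where x: "poly (map_poly of_int g) x = 0"
    "1 \<le> \<bar>real_of_int (lead_coeff g)\<bar> * cmod x"
    by (rule int_poly_has_root_of_norm_ge)
  have "f \<noteq> 0" using assms(2) by auto
  then have "\<bar>lead_coeff g\<bar> \<le> \<bar>lead_coeff f\<bar>"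
    by (auto simp: f_eq lead_coeff_mult abs_mult mult_le_cancel_left1 int_one_le_iff_zero_less)
  then have "\<bar>real_of_int (lead_coeff g)\<bar> * cmod x \<le> \<bar>real_of_int (lead_coeff f)\<bar> * cmod x"
    by (intro mult_right_mono) (linarith, simp)
  with x show ?thesis using that by simp
qed

lemma prod_at_most_irreducibles_if_no_proots_in_annulus:
  fixes f :: "int poly" and r R :: real
  assumes "degree f \<noteq> 0" "content f = 1" "coeff f 0 \<noteq> 0"
    and "r * \<bar>real_of_int (lead_coeff f)\<bar> \<le> 1"
    and no_root: "\<And>x. poly (map_poly of_int f) x = 0 \<Longrightarrow> r \<le> cmod x \<Longrightarrow> R < cmod x"
  shows "prod_at_most_irreducibles f (size (filter_mset (\<lambda>x. R < cmod x) (proots (map_poly of_int f))))"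
proof -
  have "f \<noteq> 0" "\<not> is_unit f" using assms(1) by (auto simp: is_unit_poly_iff)
  then obtain fs where fs: "\<forall>g\<in>set fs. irreducible g" "f = prod_list fs"
    by (rule irreducible_factorization_exists)
  have large_root: "\<exists>x. poly (map_poly of_int g) x = 0 \<and> R < cmod x" if "g \<in> set fs" for g
  proof -
    have "g dvd f" using that fs(2) by (simp add: prod_list_dvd)
    moreover have "irreducible g" using that fs(1) by blast
    obtain x :: complex where x: "poly (map_poly of_int g) x = 0"
      "1 \<le> \<bar>real_of_int (lead_coeff f)\<bar> * cmod x"
      using assms(2,3) \<open>irreducible g\<close> \<open>g dvd f\<close> by (rule int_poly_factor_has_root_of_norm_ge)
    have "\<bar>real_of_int (lead_coeff f)\<bar> > 0" using \<open>f \<noteq> 0\<close> by simp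
    moreover have "\<bar>real_of_int (lead_coeff f)\<bar> * r \<le> 1" using assms(4) by (simp add: mult.commute)
    then have "\<bar>real_of_int (lead_coeff f)\<bar> * r \<le> \<bar>real_of_int (lead_coeff f)\<bar> * cmod x"
      using x(2) by linarith
    ultimately have "r \<le> cmod x" by (simp add: mult_le_cancel_left_pos)
    moreover have "poly (map_poly of_int f) x = 0"
      using x(1) \<open>g dvd f\<close> by (auto simp: map_poly_of_int_mult elim!: dvdE)
    ultimately show ?thesis using x(1) no_root by blast
  qed
  have "length (map (map_poly (of_int :: int \<Rightarrow> complex)) fs)
      \<le> size (filter_mset (\<lambda>x. R < cmod x) (proots (prod_list (map (map_poly of_int) fs))))"
  proof (rule length_le_size_proots_prod_list)
    fix p :: "complex poly" assume "p \<in> set (map (map_poly of_int) fs)"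
    then obtain g where p: "p = map_poly of_int g" and "g \<in> set fs" unfolding set_map by (rule imageE)
    then have "g \<noteq> 0" using fs(1) by auto
    then show "p \<noteq> 0 \<and> (\<exists>x. poly p x = 0 \<and> R < cmod x)"
      unfolding p using large_root[OF \<open>g \<in> set fs\<close>] by simp
  qed
  then have "length fs \<le> size (filter_mset (\<lambda>x. R < cmod x) (proots (map_poly of_int f)))"
    by (simp add: fs(2) map_poly_of_int_prod_list)
  then show ?thesis using fs unfolding prod_at_most_irreducibles_def by blast
qed

lemma prod_at_most_irreducibles_if_dominant_on_annulus:
  fixes f :: "int poly" and r R :: real and c :: complex
  assumes "degree f \<noteq> 0" "content f = 1" "coeff f 0 \<noteq> 0"
    and "0 < r" "r \<le> R" "r * \<bar>real_of_int (lead_coeff f)\<bar> \<le> 1"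
    and dom: "\<And>z. r \<le> cmod z \<Longrightarrow> cmod z \<le> R \<Longrightarrow>
      cmod (poly (map_poly of_int f) z - c * z ^ j) < cmod (c * z ^ j)"
  shows "prod_at_most_irreducibles f (degree f - j)"
proof -
  have "prod_at_most_irreducibles f (size (filter_mset (\<lambda>x. R < cmod x) (proots (map_poly of_int f))))"
  proof (rule prod_at_most_irreducibles_if_no_proots_in_annulus[OF assms(1-3,6)])
    show "R < cmod x" if "poly (map_poly of_int f) x = 0" "r \<le> cmod x" for x
      using dom[of x] that by force
  qed
  moreover have "size (filter_mset (\<lambda>x. R < cmod x) (proots (map_poly (of_int :: int \<Rightarrow> complex) f)))
      = degree (map_poly (of_int :: int \<Rightarrow> complex) f) - j"
    by (rule size_proots_outside_ball_of_dominant_monomial[where c = c])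
      (use assms(1,4,5) dom in auto)
  ultimately show ?thesis by simp
qed

theorem corollary5:
  fixes f :: "int poly" and m j :: nat and b :: int and \<gamma> :: real
  assumes "m \<ge> 2"
    and "degree f = m"
    and "content f = 1"
    and "coeff f 0 * coeff f m \<noteq> 0"
    and "b > 0" and "b dvd coeff f m"
    and "\<gamma> \<ge> \<bar>real_of_int (coeff f m)\<bar> / real_of_int b"
    and "j < m"
    and "real_of_int \<bar>coeff f j\<bar> >
           (\<Sum>i<j. real_of_int \<bar>coeff f i\<bar> * real_of_int b ^ (j - i) * \<gamma> ^ (j - i))
         + (\<Sum>i\<in>{j<..m}. real_of_int \<bar>coeff f i\<bar> / real_of_int \<bar>coeff f m\<bar> ^ (i - j) * \<gamma> ^ (i - j))"
  shows "prod_at_most_irreducibles f (m - j)"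
proof -
  define A B where "A = \<bar>real_of_int (coeff f m)\<bar>" and "B = real_of_int b"
  have "coeff f m \<noteq> 0" "coeff f 0 \<noteq> 0" using assms(4) by auto
  have "\<bar>b\<bar> \<le> \<bar>coeff f m\<bar>" using \<open>coeff f m \<noteq> 0\<close> assms(6) by (rule dvd_imp_le_int)
  then have "1 \<le> B" "B \<le> A" using assms(5) by (simp_all add: A_def B_def)
  have "A \<le> B * \<gamma>" using assms(7) \<open>1 \<le> B\<close> by (simp add: A_def B_def divide_le_eq mult.commute)
  then have "B * 1 \<le> B * \<gamma>" using \<open>B \<le> A\<close> by simp
  then have "1 \<le> \<gamma>" using \<open>1 \<le> B\<close> by (simp add: mult_le_cancel_left_pos)
  have "1 \<le> A" using \<open>coeff f m \<noteq> 0\<close> unfolding A_def by linarith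
  show ?thesis
  proof (rule prod_at_most_irreducibles_if_dominant_on_annulus[where f = f and r = "1 / (B * \<gamma>)"
        and R = "\<gamma> / A" and c = "of_int (coeff f j)", unfolded assms(2)])
    show "1 / (B * \<gamma>) * \<bar>real_of_int (coeff f m)\<bar> \<le> 1"
      using \<open>A \<le> B * \<gamma>\<close> \<open>1 \<le> B\<close> \<open>1 \<le> \<gamma>\<close> by (simp add: A_def)
    have "1 / (B * \<gamma>) \<le> 1 / A" using \<open>A \<le> B * \<gamma>\<close> \<open>1 \<le> A\<close> by (intro divide_left_mono) auto
    also have "\<dots> \<le> \<gamma> / A" using \<open>1 \<le> \<gamma>\<close> \<open>1 \<le> A\<close> by (intro divide_right_mono) auto
    finally show "1 / (B * \<gamma>) \<le> \<gamma> / A" .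
    fix z :: complex assume z: "1 / (B * \<gamma>) \<le> cmod z" "cmod z \<le> \<gamma> / A"
    then have "z \<noteq> 0" "1 \<le> B * \<gamma> * cmod z"
      using \<open>1 \<le> B\<close> \<open>1 \<le> \<gamma>\<close> by (auto simp: divide_le_eq mult.commute)
    then show "cmod (poly (map_poly of_int f) z - of_int (coeff f j) * z ^ j) < cmod (of_int (coeff f j) * z ^ j)"
      using norm_poly_minus_monomial_less[of "map_poly of_int f" m j z B \<gamma> A] z(2) assms(2,8,9)
      by (simp add: coeff_map_poly A_def B_def)
  qed (use assms \<open>coeff f 0 \<noteq> 0\<close> \<open>1 \<le> B\<close> \<open>1 \<le> \<gamma>\<close> in auto)
qed

end
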